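(* Let $X$ solve $dX_t=\mu_X(X_t;\theta)\,dt+\sigma_X(X_t;\theta)\,dW_t$ on $\mathcal{X}=(x_l,x_r)$ and let $Y_t=V(X_t)$, with structure $\mathcal{S}=(\theta,V)$ ($\theta$ the data-generating parameter). Assume: (a) $\mu_X(\cdot;\theta)$ and $\sigma_X^2(\cdot;\theta)>0$ are twice continuously differentiable; (b) the scale measure satisfies $S(x;\theta)\to-\infty$ as $x\to x_l$ and $S(x;\theta)\to+\infty$ as $x\to x_r$; (c) $V$ is strictly increasing and twice continuously differentiable with inverse $U=V^{-1}$; (d) the drift $\mu_Y$ and diffusion $\sigma_Y^2$ of $Y$ are nonparametrically identified from the discretely sampled process $\{Y_{i\Delta}\}$. Define, on $\bar{\mathcal{X}}=S(\mathcal{X};\theta)$, $$\sigma_{\bar X}^2(\bar x;\vartheta)=s^2(S^{-1}(\bar x;\vartheta);\vartheta)\,\sigma_X^2(S^{-1}(\bar x;\vartheta);\vartheta).$$ Then $\mathcal{S}$ is identified if and only if the following holds: there exist no $\eta_1\neq1$, $\eta_2\neq0$ and $\tilde\theta\neq\theta$ such that $\sigma_{\bar X}^2(\bar x;\tilde\theta)=\sigma_{\bar X}^2(\eta_1\bar x+\eta_2;\theta)/\eta_1^2$ for all $\bar x\in\bar{\mathcal{X}}$.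
   Context: Scale density and scale measure: $s(x;\theta)=\exp\{-\int_{x^*}^x \frac{2\mu_X(z;\theta)}{\sigma_X^2(z;\theta)}dz\}$ and $S(x;\theta)=\int_{x^*}^x s(z;\theta)dz$ for some fixed $x^*\in\mathcal{X}$. For a structure $\mathcal{S}=(\theta,V)$ with $U=V^{-1}$, the drift and diffusion of $Y$ are $\mu_Y(y;\mathcal{S})=\frac{\mu_X(U(y);\theta)}{U'(y)}-\frac12\sigma_X^2(U(y);\theta)\frac{U''(y)}{U'(y)^3}$ and $\sigma_Y(y;\mathcal{S})=\frac{\sigma_X(U(y);\theta)}{U'(y)}$. Two structures are observationally equivalent ($\mathcal{S}\sim\tilde{\mathcal{S}}$) if they yield identical $\mu_Y(\cdot)$ and $\sigma_Y(\cdot)$ on the domain of $Y$. $\mathcal{S}$ is identified (within the model of admissible structures) if $\mathcal{S}\sim\tilde{\mathcal{S}}$ implies $\mathcal{S}=\tilde{\mathcal{S}}$. *)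

theory Defs
  imports "HOL-Analysis.Analysis"
begin

definition oint :: "(real \<Rightarrow> real) \<Rightarrow> real \<Rightarrow> real \<Rightarrow> real" where
  "oint f a b = (if a \<le> b then integral {a..b} f else - integral {b..a} f)"

definition C2_on :: "real set \<Rightarrow> (real \<Rightarrow> real) \<Rightarrow> bool" where
  "C2_on A f \<longleftrightarrow> (\<forall>x\<in>A. f field_differentiable (at x))
     \<and> (\<forall>x\<in>A. deriv f field_differentiable (at x))
     \<and> continuous_on A (deriv (deriv f))"

definition scale_density ::
  "(real \<Rightarrow> 'p \<Rightarrow> real) \<Rightarrow> (real \<Rightarrow> 'p \<Rightarrow> real) \<Rightarrow> real \<Rightarrow> 'p \<Rightarrow> real \<Rightarrow> real" where
  "scale_density mu sigma2 xstar th x =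
     exp (- oint (\<lambda>z. 2 * mu z th / sigma2 z th) xstar x)"

definition scale_measure ::
  "(real \<Rightarrow> 'p \<Rightarrow> real) \<Rightarrow> (real \<Rightarrow> 'p \<Rightarrow> real) \<Rightarrow> real \<Rightarrow> 'p \<Rightarrow> real \<Rightarrow> real" where
  "scale_measure mu sigma2 xstar th x = oint (scale_density mu sigma2 xstar th) xstar x"

definition sigma2_bar ::
  "(real \<Rightarrow> 'p \<Rightarrow> real) \<Rightarrow> (real \<Rightarrow> 'p \<Rightarrow> real) \<Rightarrow> real set \<Rightarrow> real \<Rightarrow> 'p \<Rightarrow> real \<Rightarrow> real" where
  "sigma2_bar mu sigma2 X xstar th xb =
     (let x = inv_into X (scale_measure mu sigma2 xstar th) xb
      in (scale_density mu sigma2 xstar th x)\<^sup>2 * sigma2 x th)"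

definition left_end :: "ereal \<Rightarrow> real filter" where
  "left_end xl = (if xl = -\<infinity> then at_bot else at_right (real_of_ereal xl))"

definition right_end :: "ereal \<Rightarrow> real filter" where
  "right_end xr = (if xr = \<infinity> then at_top else at_left (real_of_ereal xr))"

text \<open>Admissible transformations V: strictly increasing, C2, with V' > 0
  (so that U = V^{-1} has U' finite and nonzero, as the formulas for mu_Y need).\<close>
definition admissible_V :: "real set \<Rightarrow> (real \<Rightarrow> real) \<Rightarrow> bool" where
  "admissible_V X V \<longleftrightarrow> strict_mono_on X V \<and> C2_on X V \<and> (\<forall>x\<in>X. deriv V x > 0)"

definition mu_Y ::
  "(real \<Rightarrow> 'p \<Rightarrow> real) \<Rightarrow> (real \<Rightarrow> 'p \<Rightarrow> real) \<Rightarrow> real set \<Rightarrow> 'p \<Rightarrow> (real \<Rightarrow> real) \<Rightarrow> real \<Rightarrow> real" where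
  "mu_Y mu sigma2 X th V y =
     (let U = inv_into X V
      in mu (U y) th / deriv U y
         - 1/2 * sigma2 (U y) th * deriv (deriv U) y / (deriv U y) ^ 3)"

definition sigma2_Y ::
  "(real \<Rightarrow> 'p \<Rightarrow> real) \<Rightarrow> real set \<Rightarrow> 'p \<Rightarrow> (real \<Rightarrow> real) \<Rightarrow> real \<Rightarrow> real" where
  "sigma2_Y sigma2 X th V y =
     (let U = inv_into X V in sigma2 (U y) th / (deriv U y)\<^sup>2)"

definition obs_equiv ::
  "(real \<Rightarrow> 'p \<Rightarrow> real) \<Rightarrow> (real \<Rightarrow> 'p \<Rightarrow> real) \<Rightarrow> real set
   \<Rightarrow> 'p \<times> (real \<Rightarrow> real) \<Rightarrow> 'p \<times> (real \<Rightarrow> real) \<Rightarrow> bool" where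
  "obs_equiv mu sigma2 X S S' \<longleftrightarrow>
     (case S of (th, V) \<Rightarrow> case S' of (th', V') \<Rightarrow>
       V ` X = V' ` X \<and>
       (\<forall>y\<in>V ` X. mu_Y mu sigma2 X th V y = mu_Y mu sigma2 X th' V' y
                 \<and> sigma2_Y sigma2 X th V y = sigma2_Y sigma2 X th' V' y))"

definition identified ::
  "(real \<Rightarrow> 'p \<Rightarrow> real) \<Rightarrow> (real \<Rightarrow> 'p \<Rightarrow> real) \<Rightarrow> 'p set \<Rightarrow> real set
   \<Rightarrow> 'p \<times> (real \<Rightarrow> real) \<Rightarrow> bool" where
  "identified mu sigma2 Theta X S \<longleftrightarrow>
     (\<forall>th' V'. th' \<in> Theta \<and> admissible_V X V' \<and> obs_equiv mu sigma2 X S (th', V')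
        \<longrightarrow> th' = fst S \<and> (\<forall>x\<in>X. V' x = snd S x))"

end

theory Submission
  imports Defs "HOL-Complex_Analysis.Conformal_Mappings"
begin

(* Write U = V^-1 and h = S(.;th) o U, the map taking Y to natural scale. A direct computation
   from the formulas for mu_Y and sigma_Y gives
     sigma_Y^2 = sigma_Xbar^2(h;th) / h'^2   and   h''/h' = -2 mu_Y / sigma_Y^2.
   So the drift and diffusion of Y determine h up to an increasing affine map: (th,V) ~ (th',V')
   exactly when h = eta1 k + eta2 and sigma_Xbar^2(.;th') = sigma_Xbar^2(eta1 . + eta2;th) / eta1^2,
   where k is the natural-scale map of (th',V'). Conversely, every such (eta1, eta2, th') is realised by the admissible
   transformation V' = V o S^-1(.;th) o (eta1 S(.;th') + eta2), which agrees with (th,V) only if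
   eta1 = 1, eta2 = 0 and th' = th, because S(.;th) maps X onto the whole real line. *)

lemma strict_mono_on_if_deriv_pos:
  fixes f :: "real \<Rightarrow> real"
  assumes "is_interval A" "\<And>x. x \<in> A \<Longrightarrow> DERIV f x :> f' x" "\<And>x. x \<in> A \<Longrightarrow> f' x > 0"
  shows "strict_mono_on A f"
proof (rule strict_mono_onI)
  fix r s assume "r \<in> A" "s \<in> A" "r < s"
  show "f r < f s"
  proof (rule DERIV_pos_imp_increasing[OF \<open>r < s\<close>])
    fix x assume "r \<le> x" "x \<le> s"
    then have "x \<in> A"
      by (rule mem_is_interval_1_I[OF assms(1) \<open>r \<in> A\<close> \<open>s \<in> A\<close>])
    then show "\<exists>y. DERIV f x :> y \<and> y > 0"
      using assms(2,3) by blast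
  qed
qed

lemma oint_has_real_derivative:
  assumes "open A" "is_interval A" "a \<in> A" "continuous_on A f" "x \<in> A"
  shows "((\<lambda>u. oint f a u) has_real_derivative f x) (at x)"
proof -
  obtain e where "e > 0" "ball x e \<subseteq> A"
    using assms(1,5) open_contains_ball by blast
  define lo where "lo = min a (x - e/2)"
  define hi where "hi = max a (x + e/2)"
  have "x - e/2 \<in> ball x e" "x + e/2 \<in> ball x e"
    using \<open>e > 0\<close> by (auto simp: dist_real_def)
  then have "lo \<in> A" "hi \<in> A"
    using \<open>ball x e \<subseteq> A\<close> assms(3) by (auto simp: lo_def hi_def min_def max_def)
  then have "{lo..hi} \<subseteq> A"
    using mem_is_interval_1_I[OF assms(2) \<open>lo \<in> A\<close> \<open>hi \<in> A\<close>] by auto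
  then have cont: "continuous_on {lo..hi} f"
    using assms(4) continuous_on_subset by blast
  have x: "lo < x" "x < hi" and a: "lo \<le> a" "a \<le> hi"
    using \<open>e > 0\<close> by (auto simp: lo_def hi_def)
  have int: "f integrable_on {c..d}" if "lo \<le> c" "d \<le> hi" for c d
    using that by (intro integrable_continuous_real continuous_on_subset[OF cont]) auto
  have oint_eq: "oint f a u = integral {lo..u} f - integral {lo..a} f" if "u \<in> {lo<..<hi}" for u
  proof (cases "a \<le> u")
    case True
    have "integral {lo..a} f + integral {a..u} f = integral {lo..u} f"
      using True a that int by (intro Henstock_Kurzweil_Integration.integral_combine) auto
    then show ?thesis using True by (simp add: oint_def)
  next
    case False
    have "integral {lo..u} f + integral {u..a} f = integral {lo..a} f"
      using False a that int by (intro Henstock_Kurzweil_Integration.integral_combine) auto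
    then show ?thesis using False by (simp add: oint_def)
  qed
  have "((\<lambda>u. integral {lo..u} f - integral {lo..a} f) has_real_derivative f x) (at x within {lo..hi})"
    using integral_has_real_derivative[OF cont, of x] x by (auto intro!: derivative_eq_intros)
  then have "((\<lambda>u. integral {lo..u} f - integral {lo..a} f) has_real_derivative f x) (at x)"
    using at_within_Icc_at[OF x] by simp
  then show ?thesis
    by (rule has_field_derivative_transform_within_open[where S = "{lo<..<hi}"]) (use x oint_eq in auto)
qed

lemma C2_onD:
  assumes "C2_on A f" "x \<in> A"
  shows "DERIV f x :> deriv f x" "DERIV (deriv f) x :> deriv (deriv f) x"
  using assms unfolding C2_on_def by (auto simp: DERIV_deriv_iff_field_differentiable)

lemma C2_on_imp_continuous_on:
  assumes "C2_on A f"
  shows "continuous_on A f" "continuous_on A (deriv f)" "continuous_on A (deriv (deriv f))"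
  using C2_onD[OF assms] assms unfolding C2_on_def
  by (meson DERIV_continuous continuous_at_imp_continuous_on)+

lemma DERIV_deriv_on_open:
  assumes "open A" "\<And>x. x \<in> A \<Longrightarrow> DERIV f x :> f' x" "DERIV f' x :> D" "x \<in> A"
  shows "DERIV (deriv f) x :> D"
  by (rule has_field_derivative_transform_within_open[OF assms(3,1,4)])
    (metis assms(2) DERIV_imp_deriv)

lemma C2_onI:
  assumes "open A" "\<And>x. x \<in> A \<Longrightarrow> DERIV f x :> f' x"
    and "\<And>x. x \<in> A \<Longrightarrow> DERIV f' x :> f'' x" "continuous_on A f''"
  shows "C2_on A f"
proof -
  have f'': "DERIV (deriv f) x :> f'' x" if "x \<in> A" for x
    using DERIV_deriv_on_open assms(1-3) that by blast
  then have "continuous_on A (deriv (deriv f))"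
    using continuous_on_eq[OF assms(4)] DERIV_imp_deriv by metis
  then show ?thesis
    unfolding C2_on_def using assms(2) f'' field_differentiable_def by blast
qed

lemma C2_on_compose:
  assumes "open A" "open B" "C2_on A f" "C2_on B g" "f ` A \<subseteq> B"
  shows "C2_on A (g \<circ> f)"
    and "x \<in> A \<Longrightarrow> deriv (g \<circ> f) x = deriv g (f x) * deriv f x"
    and "x \<in> A \<Longrightarrow> deriv (deriv (g \<circ> f)) x
           = deriv (deriv g) (f x) * (deriv f x)\<^sup>2 + deriv g (f x) * deriv (deriv f) x"
proof -
  define g'f where "g'f x = deriv g (f x) * deriv f x" for x
  define g''f where "g''f x = deriv (deriv g) (f x) * (deriv f x)\<^sup>2 + deriv g (f x) * deriv (deriv f) x"
    for x
  have fB: "f x \<in> B" if "x \<in> A" for x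
    using assms(5) that by blast
  have D1: "DERIV (g \<circ> f) x :> g'f x" if "x \<in> A" for x
    unfolding g'f_def comp_def
    using DERIV_chain2[OF C2_onD(1)[OF assms(4) fB[OF that]] C2_onD(1)[OF assms(3) that]] .
  have D2: "DERIV g'f x :> g''f x" if "x \<in> A" for x
    unfolding g'f_def g''f_def
    using DERIV_mult[OF DERIV_chain2[OF C2_onD(2)[OF assms(4) fB[OF that]] C2_onD(1)[OF assms(3) that]]
        C2_onD(2)[OF assms(3) that]]
    by (simp add: power2_eq_square algebra_simps)
  note cf = C2_on_imp_continuous_on[OF assms(3)] and cg = C2_on_imp_continuous_on[OF assms(4)]
  have cont: "continuous_on A g''f"
    unfolding g''f_def
    using continuous_on_compose2[OF cg(2) cf(1) assms(5)] continuous_on_compose2[OF cg(3) cf(1) assms(5)]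
      cf(2,3) by (intro continuous_intros)
  show "C2_on A (g \<circ> f)"
    using assms(1) D1 D2 cont by (rule C2_onI)
  show "x \<in> A \<Longrightarrow> deriv (g \<circ> f) x = deriv g (f x) * deriv f x"
    using D1 DERIV_imp_deriv g'f_def by metis
  show "x \<in> A \<Longrightarrow> deriv (deriv (g \<circ> f)) x
           = deriv (deriv g) (f x) * (deriv f x)\<^sup>2 + deriv g (f x) * deriv (deriv f) x"
    using DERIV_deriv_on_open[OF assms(1) D1 D2] DERIV_imp_deriv g''f_def by metis
qed

lemma inj_on_admissible_V: "admissible_V A W \<Longrightarrow> inj_on W A"
  unfolding admissible_V_def using strict_mono_on_imp_inj_on by blast

lemma admissible_V_compose:
  assumes "open A" "open B" "admissible_V A f" "admissible_V B g" "f ` A \<subseteq> B"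
  shows "admissible_V A (g \<circ> f)"
  unfolding admissible_V_def
proof (intro conjI ballI)
  show "strict_mono_on A (g \<circ> f)"
    using assms(3-5) unfolding admissible_V_def strict_mono_on_def by (simp add: image_subset_iff)
  show "C2_on A (g \<circ> f)"
    using C2_on_compose(1)[OF assms(1,2) _ _ assms(5)] assms(3,4) by (simp add: admissible_V_def)
  show "deriv (g \<circ> f) x > 0" if "x \<in> A" for x
    using C2_on_compose(2)[OF assms(1,2) _ _ assms(5) that] assms(3-5) that
    by (auto simp: admissible_V_def image_subset_iff)
qed

lemma admissible_V_affine:
  assumes "open A" "admissible_V A f" "a > 0"
  shows "admissible_V A (\<lambda>x. a * f x + b)"
proof -
  have f: "C2_on A f" "strict_mono_on A f" "\<And>x. x \<in> A \<Longrightarrow> deriv f x > 0"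
    using assms(2) by (auto simp: admissible_V_def)
  have D1: "DERIV (\<lambda>x. a * f x + b) x :> a * deriv f x" if "x \<in> A" for x
    using C2_onD(1)[OF f(1) that] by (auto intro!: derivative_eq_intros)
  have D2: "DERIV (\<lambda>x. a * deriv f x) x :> a * deriv (deriv f) x" if "x \<in> A" for x
    using C2_onD(2)[OF f(1) that] by (auto intro!: derivative_eq_intros)
  have "continuous_on A (\<lambda>x. a * deriv (deriv f) x)"
    using C2_on_imp_continuous_on(3)[OF f(1)] by (intro continuous_intros)
  then have "C2_on A (\<lambda>x. a * f x + b)"
    using assms(1) D1 D2 by (intro C2_onI)
  moreover have "strict_mono_on A (\<lambda>x. a * f x + b)"
    using f(2) assms(3) by (simp add: strict_mono_on_def)
  moreover have "deriv (\<lambda>x. a * f x + b) x > 0" if "x \<in> A" for x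
    using DERIV_imp_deriv[OF D1[OF that]] f(3)[OF that] assms(3) by simp
  ultimately show ?thesis
    unfolding admissible_V_def by blast
qed

lemma admissible_V_inv_into:
  assumes "open A" "admissible_V A f"
  shows "open (f ` A)" "admissible_V (f ` A) (inv_into A f)"
proof -
  let ?g = "inv_into A f"
  have f: "C2_on A f" "strict_mono_on A f" "\<And>x. x \<in> A \<Longrightarrow> deriv f x > 0"
    using assms(2) by (auto simp: admissible_V_def)
  have inj: "inj_on f A"
    using inj_on_admissible_V[OF assms(2)] .
  have cont: "continuous_on A f"
    using C2_on_imp_continuous_on(1)[OF f(1)] .
  show "open (f ` A)"
    using invariance_of_domain[OF cont assms(1) inj] .
  have gA: "?g y \<in> A" and fg: "f (?g y) = y" if "y \<in> f ` A" for y
    using that by (auto simp: inv_into_into f_inv_into_f)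
  have nz: "deriv f (?g y) \<noteq> 0" if "y \<in> f ` A" for y
    using f(3)[OF gA[OF that]] by simp
  have D1: "DERIV ?g y :> inverse (deriv f (?g y))" if "y \<in> f ` A" for y
  proof (rule has_field_derivative_inverse_strong_x[where g = ?g, OF _ _ assms(1) cont gA[OF that] fg[OF that]])
    show "DERIV f (?g y) :> deriv f (?g y)"
      using C2_onD(1)[OF f(1) gA[OF that]] .
    show "deriv f (?g y) \<noteq> 0"
      using nz[OF that] .
  qed (use inj in auto)
  then have cont_g: "continuous_on (f ` A) ?g"
    by (meson DERIV_continuous continuous_at_imp_continuous_on)
  define g'' where "g'' y = - deriv (deriv f) (?g y) / deriv f (?g y) ^ 3" for y
  have D2: "DERIV (\<lambda>y. inverse (deriv f (?g y))) y :> g'' y" if "y \<in> f ` A" for y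
    using DERIV_inverse_fun[OF DERIV_chain2[OF C2_onD(2)[OF f(1) gA[OF that]] D1[OF that]] nz[OF that]]
    by (rule DERIV_cong) (simp add: g''_def field_simps power3_eq_cube)
  have "continuous_on (f ` A) g''"
    unfolding g''_def using nz gA C2_on_imp_continuous_on[OF f(1)]
    by (intro continuous_intros continuous_on_compose2[OF _ cont_g, of A]) auto
  then have "C2_on (f ` A) ?g"
    using \<open>open (f ` A)\<close> D1 D2 by (intro C2_onI)
  moreover have "strict_mono_on (f ` A) ?g"
  proof (rule strict_mono_onI)
    fix y z assume "y \<in> f ` A" "z \<in> f ` A" "y < z"
    then show "?g y < ?g z"
      using strict_mono_on_leD[OF f(2) gA gA, of z y] fg by force
  qed
  moreover have "deriv ?g y > 0" if "y \<in> f ` A" for y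
    using DERIV_imp_deriv[OF D1[OF that]] f(3)[OF gA[OF that]] by simp
  ultimately show "admissible_V (f ` A) ?g"
    unfolding admissible_V_def by blast
qed

lemma deriv_affine_on_open:
  assumes "open I" "C2_on I g" "\<And>y. y \<in> I \<Longrightarrow> f y = a * g y + b" "y \<in> I"
  shows "deriv f y = a * deriv g y" "deriv (deriv f) y = a * deriv (deriv g) y"
proof -
  have D1: "DERIV f z :> a * deriv g z" if "z \<in> I" for z
  proof (rule has_field_derivative_transform_within_open[OF _ assms(1) that])
    show "DERIV (\<lambda>z. a * g z + b) z :> a * deriv g z"
      using C2_onD(1)[OF assms(2) that] by (auto intro!: derivative_eq_intros)
  qed (use assms(3) in simp)
  then show "deriv f y = a * deriv g y"
    using assms(4) DERIV_imp_deriv by blast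
  have "DERIV (\<lambda>z. a * deriv g z) y :> a * deriv (deriv g) y"
    using C2_onD(2)[OF assms(2,4)] by (rule DERIV_cmult)
  then show "deriv (deriv f) y = a * deriv (deriv g) y"
    using DERIV_deriv_on_open[OF assms(1) D1 _ assms(4)] DERIV_imp_deriv by blast
qed

lemma affine_if_deriv2_over_deriv_eq:
  fixes f g :: "real \<Rightarrow> real"
  assumes I: "is_interval I" and C2: "C2_on I f" "C2_on I g"
    and pos: "\<And>y. y \<in> I \<Longrightarrow> deriv f y > 0" "\<And>y. y \<in> I \<Longrightarrow> deriv g y > 0"
    and ratio: "\<And>y. y \<in> I \<Longrightarrow> deriv (deriv f) y / deriv f y = deriv (deriv g) y / deriv g y"
  obtains a b where "a > 0" "\<And>y. y \<in> I \<Longrightarrow> f y = a * g y + b"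
proof (cases "I = {}")
  case True
  then show ?thesis
    using that[of 1] by simp
next
  case False
  have "convex I"
    using I is_interval_convex_1 by blast
  have "\<exists>a. \<forall>y\<in>I. deriv f y / deriv g y = a"
  proof (rule has_field_derivative_zero_constant[OF \<open>convex I\<close>])
    fix y assume y: "y \<in> I"
    have "DERIV (\<lambda>y. deriv f y / deriv g y) y :>
        (deriv (deriv f) y * deriv g y - deriv f y * deriv (deriv g) y) / (deriv g y * deriv g y)"
      using C2_onD(2)[OF C2(1) y] C2_onD(2)[OF C2(2) y] pos(2)[OF y] by (intro DERIV_divide) auto
    moreover have "deriv (deriv f) y * deriv g y = deriv f y * deriv (deriv g) y"
      using ratio[OF y] pos[OF y] by (simp add: field_simps)
    ultimately show "((\<lambda>y. deriv f y / deriv g y) has_field_derivative 0) (at y within I)"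
      by (simp add: has_field_derivative_at_within)
  qed
  then obtain a where a: "\<And>y. y \<in> I \<Longrightarrow> deriv f y = a * deriv g y"
    using pos(2) by (metis less_irrefl nonzero_divide_eq_eq)
  obtain y0 where "y0 \<in> I"
    using False by blast
  then have "a > 0"
    using a pos by (metis zero_less_mult_pos2)
  have "\<exists>b. \<forall>y\<in>I. f y - a * g y = b"
  proof (rule has_field_derivative_zero_constant[OF \<open>convex I\<close>])
    fix y assume y: "y \<in> I"
    have "DERIV (\<lambda>y. f y - a * g y) y :> deriv f y - a * deriv g y"
      using C2_onD(1)[OF C2(1) y] C2_onD(1)[OF C2(2) y] by (auto intro!: derivative_eq_intros)
    then show "((\<lambda>y. f y - a * g y) has_field_derivative 0) (at y within I)"
      using a[OF y] by (simp add: has_field_derivative_at_within)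
  qed
  then obtain b where "\<And>y. y \<in> I \<Longrightarrow> f y = a * g y + b"
    by (metis add.commute diff_eq_eq)
  then show ?thesis
    using that \<open>a > 0\<close> by blast
qed

lemma eventually_left_end:
  assumes "xl < ereal c"
  shows "eventually (\<lambda>x. xl < ereal x \<and> x < c) (left_end xl)"
proof (cases "xl = -\<infinity>")
  case True
  then show ?thesis
    by (auto simp: left_end_def eventually_at_bot_dense)
next
  case False
  then obtain r where r: "xl = ereal r" "r < c"
    using assms by (cases xl) auto
  then have "eventually (\<lambda>x. x \<in> {r<..<c}) (at_right r)"
    by (intro eventually_at_right_real)
  then show ?thesis
    using r by (auto simp: left_end_def elim!: eventually_mono)
qed

lemma eventually_right_end:
  assumes "ereal c < xr"
  shows "eventually (\<lambda>x. ereal x < xr \<and> c < x) (right_end xr)"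
proof (cases "xr = \<infinity>")
  case True
  then show ?thesis
    by (auto simp: right_end_def eventually_at_top_dense)
next
  case False
  then obtain r where r: "xr = ereal r" "c < r"
    using assms by (cases xr) auto
  then have "eventually (\<lambda>x. x \<in> {c<..<r}) (at_left r)"
    by (intro eventually_at_left_real)
  then show ?thesis
    using r by (auto simp: right_end_def elim!: eventually_mono)
qed

lemma open_interval_ereal:
  fixes xl xr :: ereal
  shows "open {x. xl < ereal x \<and> ereal x < xr}" "is_interval {x. xl < ereal x \<and> ereal x < xr}"
proof -
  have "open ({x. xl < ereal x} \<inter> {x. ereal x < xr})"
    by (intro open_Int open_Collect_less continuous_intros)
  then show "open {x. xl < ereal x \<and> ereal x < xr}"
    by (simp add: Collect_conj_eq)
  have "xl < ereal x \<and> ereal x < xr"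
    if "xl < ereal a" "ereal b < xr" "a \<le> x" "x \<le> b" for a b x
  proof -
    have "ereal a \<le> ereal x" "ereal x \<le> ereal b"
      using that(3,4) by simp_all
    then show ?thesis
      using that(1,2) by (meson order_less_le_trans order_le_less_trans)
  qed
  then show "is_interval {x. xl < ereal x \<and> ereal x < xr}"
    unfolding is_interval_1 by blast
qed

lemma image_eq_UNIV_if_filterlim_ends:
  fixes f :: "real \<Rightarrow> real"
  assumes X: "X = {x. xl < ereal x \<and> ereal x < xr}" and "c \<in> X" and "continuous_on X f"
    and "filterlim f at_bot (left_end xl)" "filterlim f at_top (right_end xr)"
  shows "f ` X = UNIV"
proof -
  have "is_interval (f ` X)"
    using connected_continuous_image[OF assms(3)] open_interval_ereal(2) X
    by (simp add: is_interval_connected_1)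
  have c: "xl < ereal c" "ereal c < xr"
    using assms(2) X by auto
  have "\<exists>x\<in>X. f x \<le> y" for y
  proof -
    have "eventually (\<lambda>x. (xl < ereal x \<and> x < c) \<and> f x \<le> y) (left_end xl)"
      using eventually_conj[OF eventually_left_end[OF c(1)] assms(4)[unfolded filterlim_at_bot, rule_format]] .
    moreover have "left_end xl \<noteq> bot"
      by (simp add: left_end_def)
    ultimately obtain x where "xl < ereal x" "x < c" "f x \<le> y"
      using eventually_happens' by blast
    moreover have "ereal x < ereal c"
      using \<open>x < c\<close> by simp
    ultimately show ?thesis
      unfolding X using c(2) order.strict_trans by blast
  qed
  moreover have "\<exists>x\<in>X. y \<le> f x" for y
  proof -
    have "eventually (\<lambda>x. (ereal x < xr \<and> c < x) \<and> y \<le> f x) (right_end xr)"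
      using eventually_conj[OF eventually_right_end[OF c(2)] assms(5)[unfolded filterlim_at_top, rule_format]] .
    moreover have "right_end xr \<noteq> bot"
      by (simp add: right_end_def)
    ultimately obtain x where "ereal x < xr" "c < x" "y \<le> f x"
      using eventually_happens' by blast
    moreover have "ereal c < ereal x"
      using \<open>c < x\<close> by simp
    ultimately show ?thesis
      unfolding X using c(1) order.strict_trans by blast
  qed
  ultimately have "y \<in> f ` X" for y
    using mem_is_interval_1_I[OF \<open>is_interval (f ` X)\<close>] by blast
  then show ?thesis
    by blast
qed

locale diffusion_model =
  fixes mu sigma2 :: "real \<Rightarrow> 'p \<Rightarrow> real" and Theta :: "'p set" and X :: "real set"
    and xstar :: real
  assumes open_X: "open X" and is_interval_X: "is_interval X" and xstar_in_X: "xstar \<in> X"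
    and regular: "\<And>t. t \<in> Theta \<Longrightarrow>
      C2_on X (\<lambda>x. mu x t) \<and> C2_on X (\<lambda>x. sigma2 x t) \<and> (\<forall>x\<in>X. sigma2 x t > 0)"
begin

abbreviation s :: "'p \<Rightarrow> real \<Rightarrow> real" where
  "s t \<equiv> scale_density mu sigma2 xstar t"

abbreviation S :: "'p \<Rightarrow> real \<Rightarrow> real" where
  "S t \<equiv> scale_measure mu sigma2 xstar t"

lemma scale_density_pos: "s t x > 0"
  by (simp add: scale_density_def)

lemma continuous_on_drift_over_diffusion:
  assumes "t \<in> Theta"
  shows "continuous_on X (\<lambda>x. 2 * mu x t / sigma2 x t)"
  using regular[OF assms] C2_on_imp_continuous_on(1)
  by (intro continuous_intros) (auto simp: less_imp_neq[symmetric])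

lemma scale_density_has_real_derivative:
  assumes "t \<in> Theta" "x \<in> X"
  shows "DERIV (s t) x :> - (2 * mu x t / sigma2 x t) * s t x"
proof -
  have "((\<lambda>u. oint (\<lambda>z. 2 * mu z t / sigma2 z t) xstar u)
          has_real_derivative 2 * mu x t / sigma2 x t) (at x)"
    by (rule oint_has_real_derivative[OF open_X is_interval_X xstar_in_X
          continuous_on_drift_over_diffusion[OF assms(1)] assms(2)])
  then show ?thesis
    unfolding scale_density_def[abs_def] by (auto intro!: derivative_eq_intros)
qed

lemma continuous_on_scale_density: "t \<in> Theta \<Longrightarrow> continuous_on X (s t)"
  using scale_density_has_real_derivative by (meson DERIV_continuous continuous_at_imp_continuous_on)

lemma scale_measure_has_real_derivative:
  assumes "t \<in> Theta" "x \<in> X"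
  shows "DERIV (S t) x :> s t x"
  unfolding scale_measure_def[abs_def]
  by (rule oint_has_real_derivative[OF open_X is_interval_X xstar_in_X
        continuous_on_scale_density[OF assms(1)] assms(2)])

lemma deriv_scale_measure:
  assumes "t \<in> Theta" "x \<in> X"
  shows "deriv (S t) x = s t x" "deriv (deriv (S t)) x = - (2 * mu x t / sigma2 x t) * s t x"
  using DERIV_imp_deriv[OF scale_measure_has_real_derivative[OF assms]]
    DERIV_imp_deriv[OF DERIV_deriv_on_open[OF open_X scale_measure_has_real_derivative[OF assms(1)]
      scale_density_has_real_derivative[OF assms] assms(2)]]
  by auto

lemma admissible_scale_measure:
  assumes "t \<in> Theta"
  shows "admissible_V X (S t)"
proof -
  have "continuous_on X (\<lambda>x. - (2 * mu x t / sigma2 x t) * s t x)"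
    using continuous_on_mult[OF continuous_on_minus[OF continuous_on_drift_over_diffusion[OF assms]]
        continuous_on_scale_density[OF assms]] .
  then have "C2_on X (S t)"
    using open_X scale_measure_has_real_derivative[OF assms] scale_density_has_real_derivative[OF assms]
    by (intro C2_onI)
  moreover have "strict_mono_on X (S t)"
    using is_interval_X scale_measure_has_real_derivative[OF assms] scale_density_pos
    by (rule strict_mono_on_if_deriv_pos)
  ultimately show ?thesis
    unfolding admissible_V_def using deriv_scale_measure(1)[OF assms] scale_density_pos by simp
qed

end

locale recurrent_diffusion_model = diffusion_model mu sigma2 Theta X xstar
  for mu sigma2 :: "real \<Rightarrow> 'p \<Rightarrow> real" and Theta :: "'p set" and X :: "real set"
    and xstar :: real +
  assumes scale_measure_surj: "\<And>t. t \<in> Theta \<Longrightarrow> scale_measure mu sigma2 xstar t ` X = UNIV"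
begin

definition natural_scale :: "'p \<Rightarrow> (real \<Rightarrow> real) \<Rightarrow> real \<Rightarrow> real" where
  "natural_scale t W = S t \<circ> inv_into X W"

lemma natural_scale_apply: "admissible_V X W \<Longrightarrow> x \<in> X \<Longrightarrow> natural_scale t W (W x) = S t x"
  by (simp add: natural_scale_def inj_on_admissible_V)

lemma natural_scale_surj:
  assumes "t \<in> Theta" "admissible_V X W"
  shows "natural_scale t W ` (W ` X) = UNIV"
proof -
  have "natural_scale t W ` (W ` X) = S t ` X"
    unfolding image_image using natural_scale_apply[OF assms(2)] by simp
  then show ?thesis
    using scale_measure_surj[OF assms(1)] by simp
qed

lemma admissible_natural_scale:
  assumes "t \<in> Theta" "admissible_V X W"
  shows "open (W ` X)" "is_interval (W ` X)" "admissible_V (W ` X) (natural_scale t W)"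
proof -
  show "open (W ` X)"
    using admissible_V_inv_into(1)[OF open_X assms(2)] .
  have U: "admissible_V (W ` X) (inv_into X W)"
    using admissible_V_inv_into(2)[OF open_X assms(2)] .
  have "continuous_on X W"
    using assms(2) C2_on_imp_continuous_on(1) by (auto simp: admissible_V_def)
  then show "is_interval (W ` X)"
    using connected_continuous_image is_interval_X by (auto simp: is_interval_connected_1)
  show "admissible_V (W ` X) (natural_scale t W)"
    unfolding natural_scale_def
    by (rule admissible_V_compose[OF \<open>open (W ` X)\<close> open_X U admissible_scale_measure[OF assms(1)]])
      (auto simp: inv_into_into)
qed

lemma deriv_natural_scale:
  assumes "t \<in> Theta" "admissible_V X W" "y \<in> W ` X"
  defines "U \<equiv> inv_into X W"
  shows "deriv (natural_scale t W) y = s t (U y) * deriv U y"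
    and "deriv (deriv (natural_scale t W)) y
           = s t (U y) * (deriv (deriv U) y - 2 * mu (U y) t / sigma2 (U y) t * (deriv U y)\<^sup>2)"
proof -
  have "open (W ` X)" "admissible_V (W ` X) U"
    using admissible_V_inv_into[OF open_X assms(2)] by (auto simp: U_def)
  moreover have "U y \<in> X"
    using assms(3) by (simp add: U_def inv_into_into)
  moreover have "U ` (W ` X) \<subseteq> X"
    by (auto simp: U_def inv_into_into)
  ultimately show "deriv (natural_scale t W) y = s t (U y) * deriv U y"
    and "deriv (deriv (natural_scale t W)) y
           = s t (U y) * (deriv (deriv U) y - 2 * mu (U y) t / sigma2 (U y) t * (deriv U y)\<^sup>2)"
    using C2_on_compose(2,3)[OF _ open_X _ _ _ assms(3), of U "S t"] assms(1,2)
      admissible_scale_measure[OF assms(1)] deriv_scale_measure[OF assms(1)]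
    by (auto simp: natural_scale_def U_def admissible_V_def algebra_simps)
qed

lemma sigma2_Y_natural_scale:
  assumes "t \<in> Theta" "admissible_V X W" "y \<in> W ` X"
  shows "sigma2_Y sigma2 X t W y
           = sigma2_bar mu sigma2 X xstar t (natural_scale t W y) / (deriv (natural_scale t W) y)\<^sup>2"
    and "sigma2_Y sigma2 X t W y > 0"
proof -
  define U where "U = inv_into X W"
  have u: "U y \<in> X"
    using assms(3) by (simp add: U_def inv_into_into)
  have "deriv U y > 0"
    using admissible_V_inv_into(2)[OF open_X assms(2)] assms(3) unfolding U_def admissible_V_def by blast
  moreover have "sigma2 (U y) t > 0"
    using regular[OF assms(1)] u by blast
  moreover have "inv_into X (S t) (S t (U y)) = U y"
    using inj_on_admissible_V[OF admissible_scale_measure[OF assms(1)]] u by simp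
  moreover have "sigma2_Y sigma2 X t W y = sigma2 (U y) t / (deriv U y)\<^sup>2"
    by (simp add: sigma2_Y_def U_def Let_def)
  ultimately show "sigma2_Y sigma2 X t W y
           = sigma2_bar mu sigma2 X xstar t (natural_scale t W y) / (deriv (natural_scale t W) y)\<^sup>2"
    and "sigma2_Y sigma2 X t W y > 0"
    using deriv_natural_scale(1)[OF assms] scale_density_pos[of t "U y"]
    by (simp_all add: sigma2_bar_def natural_scale_def U_def Let_def power_mult_distrib)
qed

lemma deriv2_over_deriv_natural_scale:
  assumes "t \<in> Theta" "admissible_V X W" "y \<in> W ` X"
  shows "deriv (deriv (natural_scale t W)) y / deriv (natural_scale t W) y
           = - 2 * mu_Y mu sigma2 X t W y / sigma2_Y sigma2 X t W y"
proof -
  define U where "U = inv_into X W"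
  have u: "U y \<in> X"
    using assms(3) by (simp add: U_def inv_into_into)
  have "deriv U y > 0"
    using admissible_V_inv_into(2)[OF open_X assms(2)] assms(3) unfolding U_def admissible_V_def by blast
  moreover have "sigma2 (U y) t > 0"
    using regular[OF assms(1)] u by blast
  ultimately show ?thesis
    unfolding mu_Y_def sigma2_Y_def Let_def U_def[symmetric] deriv_natural_scale[OF assms, folded U_def]
    using scale_density_pos[of t "U y"]
    by (simp add: field_simps power2_eq_square power3_eq_cube)
qed

lemma affine_natural_scales_if_obs_equiv:
  assumes t: "t \<in> Theta" "t' \<in> Theta" and W: "admissible_V X W" "admissible_V X W'"
    and equiv: "obs_equiv mu sigma2 X (t, W) (t', W')"
  obtains a b where "a > 0" "\<And>y. y \<in> W ` X \<Longrightarrow> natural_scale t W y = a * natural_scale t' W' y + b"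
    and "\<And>xb. sigma2_bar mu sigma2 X xstar t' xb = sigma2_bar mu sigma2 X xstar t (a * xb + b) / a\<^sup>2"
proof -
  let ?h = "natural_scale t W" and ?h' = "natural_scale t' W'"
  have I: "W' ` X = W ` X"
    and mu_eq: "\<And>y. y \<in> W ` X \<Longrightarrow> mu_Y mu sigma2 X t W y = mu_Y mu sigma2 X t' W' y"
    and sigma_eq: "\<And>y. y \<in> W ` X \<Longrightarrow> sigma2_Y sigma2 X t W y = sigma2_Y sigma2 X t' W' y"
    using equiv unfolding obs_equiv_def prod.case by (blast, blast, blast)
  note h = admissible_natural_scale[OF t(1) W(1)]
    and h' = admissible_natural_scale[OF t(2) W(2), unfolded I]
  have "C2_on (W ` X) ?h" "C2_on (W ` X) ?h'"
    and "\<And>y. y \<in> W ` X \<Longrightarrow> deriv ?h y > 0"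
    and pos: "\<And>y. y \<in> W ` X \<Longrightarrow> deriv ?h' y > 0"
    using h(3) h'(3) by (auto simp: admissible_V_def)
  moreover have "deriv (deriv ?h) y / deriv ?h y = deriv (deriv ?h') y / deriv ?h' y" if "y \<in> W ` X" for y
    using deriv2_over_deriv_natural_scale[OF t(1) W(1) that]
      deriv2_over_deriv_natural_scale[OF t(2) W(2), unfolded I, OF that] mu_eq[OF that] sigma_eq[OF that]
    by simp
  ultimately obtain a b where "a > 0" and affine: "\<And>y. y \<in> W ` X \<Longrightarrow> ?h y = a * ?h' y + b"
    by (rule affine_if_deriv2_over_deriv_eq[OF h(2)]) blast+
  have "sigma2_bar mu sigma2 X xstar t' xb = sigma2_bar mu sigma2 X xstar t (a * xb + b) / a\<^sup>2" for xb
  proof -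
    obtain y where y: "y \<in> W ` X" "?h' y = xb"
      using natural_scale_surj[OF t(2) W(2)] I by (metis UNIV_I imageE)
    have "deriv ?h y = a * deriv ?h' y"
      using deriv_affine_on_open(1)[OF h(1) \<open>C2_on (W ` X) ?h'\<close> affine y(1)] .
    moreover have "deriv ?h' y > 0"
      using pos[OF y(1)] .
    moreover have "sigma2_bar mu sigma2 X xstar t' xb / (deriv ?h' y)\<^sup>2
        = sigma2_bar mu sigma2 X xstar t (a * xb + b) / (deriv ?h y)\<^sup>2"
      using sigma_eq[OF y(1)] sigma2_Y_natural_scale(1)[OF t(1) W(1) y(1)]
        sigma2_Y_natural_scale(1)[OF t(2) W(2), unfolded I, OF y(1)] affine[OF y(1)] y(2)
      by simp
    ultimately show ?thesis
      using \<open>a > 0\<close> by (simp add: power_mult_distrib divide_simps)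
  qed
  with \<open>a > 0\<close> affine that show ?thesis
    by blast
qed

lemma obs_equiv_if_affine_natural_scales:
  assumes t: "t \<in> Theta" "t' \<in> Theta" and W: "admissible_V X W" "admissible_V X W'"
    and I: "W' ` X = W ` X" and "a > 0"
    and affine: "\<And>y. y \<in> W ` X \<Longrightarrow> natural_scale t W y = a * natural_scale t' W' y + b"
    and sigma_bar: "\<And>xb. sigma2_bar mu sigma2 X xstar t' xb = sigma2_bar mu sigma2 X xstar t (a * xb + b) / a\<^sup>2"
  shows "obs_equiv mu sigma2 X (t, W) (t', W')"
proof -
  let ?h = "natural_scale t W" and ?h' = "natural_scale t' W'"
  note h = admissible_natural_scale[OF t(1) W(1)]
    and h' = admissible_natural_scale[OF t(2) W(2), unfolded I]
  have C2: "C2_on (W ` X) ?h'" and pos: "\<And>y. y \<in> W ` X \<Longrightarrow> deriv ?h' y > 0"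
    using h'(3) by (auto simp: admissible_V_def)
  have "sigma2_Y sigma2 X t W y = sigma2_Y sigma2 X t' W' y
      \<and> mu_Y mu sigma2 X t W y = mu_Y mu sigma2 X t' W' y" if y: "y \<in> W ` X" for y
  proof -
    note d = deriv_affine_on_open[OF h(1) C2 affine y]
    have "sigma2_Y sigma2 X t W y = sigma2_Y sigma2 X t' W' y"
      using sigma2_Y_natural_scale(1)[OF t(1) W(1) y] sigma2_Y_natural_scale(1)[OF t(2) W(2), unfolded I, OF y]
        sigma_bar[of "?h' y"] affine[OF y] d(1) pos[OF y] \<open>a > 0\<close>
      by (simp add: power_mult_distrib)
    moreover have "mu_Y mu sigma2 X t W y = mu_Y mu sigma2 X t' W' y"
      using deriv2_over_deriv_natural_scale[OF t(1) W(1) y]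
        deriv2_over_deriv_natural_scale[OF t(2) W(2), unfolded I, OF y]
        calculation d \<open>a > 0\<close> sigma2_Y_natural_scale(2)[OF t(1) W(1) y] by simp
    ultimately show ?thesis ..
  qed
  then show ?thesis
    unfolding obs_equiv_def using I by auto
qed

lemma exists_admissible_with_affine_natural_scale:
  assumes t: "t \<in> Theta" "t' \<in> Theta" and W: "admissible_V X W" and "a > 0"
  obtains W' where "admissible_V X W'" "W' ` X = W ` X"
    and "\<And>y. y \<in> W ` X \<Longrightarrow> natural_scale t W y = a * natural_scale t' W' y + b"
proof -
  define L where "L x = a * S t' x + b" for x
  define R where "R = inv_into X (S t)"
  have L: "admissible_V X L" "L ` X = UNIV"
  proof -
    show "admissible_V X L"
      unfolding L_def[abs_def]
      by (rule admissible_V_affine[OF open_X admissible_scale_measure[OF t(2)] \<open>a > 0\<close>])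
    have "z \<in> L ` X" for z
    proof
      let ?x = "inv_into X (S t') ((z - b) / a)"
      show "?x \<in> X"
        using scale_measure_surj[OF t(2)] by (simp add: inv_into_into)
      have "S t' ?x = (z - b) / a"
        using scale_measure_surj[OF t(2)] by (simp add: f_inv_into_f)
      then show "z = L ?x"
        using \<open>a > 0\<close> by (simp add: L_def)
    qed
    then show "L ` X = UNIV"
      by blast
  qed
  have R: "admissible_V UNIV R"
    using admissible_V_inv_into(2)[OF open_X admissible_scale_measure[OF t(1)]] scale_measure_surj[OF t(1)]
    by (simp add: R_def)
  have "R ` UNIV = X"
    using inv_into_image_cancel[OF inj_on_admissible_V[OF admissible_scale_measure[OF t(1)]], of X]
      scale_measure_surj[OF t(1)] by (simp add: R_def)
  have SR: "S t (R z) = z" for z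
    using scale_measure_surj[OF t(1)] by (simp add: R_def f_inv_into_f)
  define W' where "W' = W \<circ> (R \<circ> L)"
  have "admissible_V X (R \<circ> L)"
    using admissible_V_compose[OF open_X open_UNIV L(1) R] by simp
  then have "admissible_V X W'"
    unfolding W'_def using \<open>R ` UNIV = X\<close> by (intro admissible_V_compose[OF open_X open_X _ W]) auto
  moreover have "W' ` X = W ` X"
    unfolding W'_def image_comp[symmetric] L(2) \<open>R ` UNIV = X\<close> ..
  moreover have "natural_scale t W y = a * natural_scale t' W' y + b" if "y \<in> W ` X" for y
  proof -
    have "y \<in> W' ` X"
      using \<open>W' ` X = W ` X\<close> that by simp
    then obtain x where x: "x \<in> X" "y = W' x"
      by blast
    have "R (L x) \<in> X"
      using rangeI[of R "L x"] \<open>R ` UNIV = X\<close> by simp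
    then have "natural_scale t W y = L x"
      using natural_scale_apply[OF W] SR x(2) by (simp add: W'_def)
    also have "\<dots> = a * natural_scale t' W' y + b"
      using natural_scale_apply[OF \<open>admissible_V X W'\<close> x(1)] x(2) by (simp add: L_def)
    finally show ?thesis .
  qed
  ultimately show ?thesis
    using that by blast
qed

lemma eq_on_if_natural_scales_eq:
  assumes "t \<in> Theta" and W: "admissible_V X W" "admissible_V X W'" and I: "W' ` X = W ` X"
    and eq: "\<And>y. y \<in> W ` X \<Longrightarrow> natural_scale t W' y = natural_scale t W y"
    and "x \<in> X"
  shows "W' x = W x"
proof -
  have "W' x \<in> W ` X"
    using I \<open>x \<in> X\<close> by (metis imageI)
  then obtain z where z: "z \<in> X" "W' x = W z"
    by blast
  have "S t x = S t z"
    using eq[of "W' x"] natural_scale_apply[OF W(2) \<open>x \<in> X\<close>] natural_scale_apply[OF W(1) z(1)] z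
    by simp
  then have "x = z"
    using inj_on_admissible_V[OF admissible_scale_measure[OF assms(1)]] \<open>x \<in> X\<close> z(1) by (meson inj_onD)
  then show ?thesis
    using z(2) by simp
qed

theorem identified_iff_no_affine_sigma2_bar_relation:
  assumes th: "th \<in> Theta" and V: "admissible_V X V"
  shows "identified mu sigma2 Theta X (th, V) \<longleftrightarrow>
    \<not> (\<exists>eta1 eta2 th'. th' \<in> Theta \<and> eta1 > 0 \<and> (eta1 \<noteq> 1 \<or> eta2 \<noteq> 0 \<or> th' \<noteq> th) \<and>
         (\<forall>xb. sigma2_bar mu sigma2 X xstar th' xb
                 = sigma2_bar mu sigma2 X xstar th (eta1 * xb + eta2) / eta1\<^sup>2))"
    (is "?identified \<longleftrightarrow> \<not> ?relation")
proof
  assume ?identified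
  show "\<not> ?relation"
  proof
    assume ?relation
    then obtain eta1 eta2 th' where th': "th' \<in> Theta" and "eta1 > 0"
      and nontrivial: "eta1 \<noteq> 1 \<or> eta2 \<noteq> 0 \<or> th' \<noteq> th"
      and rel: "\<And>xb. sigma2_bar mu sigma2 X xstar th' xb
                       = sigma2_bar mu sigma2 X xstar th (eta1 * xb + eta2) / eta1\<^sup>2"
      by blast
    obtain V' where V': "admissible_V X V'" "V' ` X = V ` X"
      and affine: "\<And>y. y \<in> V ` X \<Longrightarrow> natural_scale th V y = eta1 * natural_scale th' V' y + eta2"
      using exists_admissible_with_affine_natural_scale[OF th th' V \<open>eta1 > 0\<close>] by blast
    have "obs_equiv mu sigma2 X (th, V) (th', V')"
      by (rule obs_equiv_if_affine_natural_scales[OF th th' V V' \<open>eta1 > 0\<close> affine rel])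
    then have "th' = th" and same: "\<And>x. x \<in> X \<Longrightarrow> V' x = V x"
      using \<open>?identified\<close> th' V'(1) unfolding identified_def by auto
    have "S th x = eta1 * S th x + eta2" if "x \<in> X" for x
      using affine[of "V x"] natural_scale_apply[OF V that] natural_scale_apply[OF V'(1) that]
        same[OF that] \<open>th' = th\<close> that by simp
    then have "z = eta1 * z + eta2" for z
      using scale_measure_surj[OF th] by (metis UNIV_I imageE)
    from this[of 0] this[of 1] have "eta2 = 0" "eta1 = 1"
      by simp_all
    with nontrivial \<open>th' = th\<close> show False
      by simp
  qed
next
  assume "\<not> ?relation"
  show ?identified
    unfolding identified_def
  proof (intro allI impI, elim conjE)
    fix th' V'
    assume th': "th' \<in> Theta" and V': "admissible_V X V'"
      and equiv: "obs_equiv mu sigma2 X (th, V) (th', V')"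
    obtain a b where "a > 0"
      and affine: "\<And>y. y \<in> V ` X \<Longrightarrow> natural_scale th V y = a * natural_scale th' V' y + b"
      and rel: "\<And>xb. sigma2_bar mu sigma2 X xstar th' xb
                       = sigma2_bar mu sigma2 X xstar th (a * xb + b) / a\<^sup>2"
      using affine_natural_scales_if_obs_equiv[OF th th' V V' equiv] by blast
    then have "a = 1" "b = 0" "th' = th"
      using \<open>\<not> ?relation\<close> th' by blast+
    moreover have "V' ` X = V ` X"
      using equiv by (simp add: obs_equiv_def)
    ultimately have "V' x = V x" if "x \<in> X" for x
      using eq_on_if_natural_scales_eq[OF th V V'] affine that by simp
    with \<open>th' = th\<close> show "th' = fst (th, V) \<and> (\<forall>x\<in>X. V' x = snd (th, V) x)"
      by simp
  qed
qed

end

theorem theorem5: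
  fixes mu sigma2 :: "real \<Rightarrow> 'p \<Rightarrow> real"
    and Theta :: "'p set" and th :: 'p
    and xl xr :: ereal and xstar :: real
    and V :: "real \<Rightarrow> real"
    and X :: "real set"
  defines "X \<equiv> {x. xl < ereal x \<and> ereal x < xr}"
  assumes interval: "xl < xr" and xstar: "xstar \<in> X"
    and a: "\<forall>t\<in>Theta. C2_on X (\<lambda>x. mu x t) \<and> C2_on X (\<lambda>x. sigma2 x t)
                     \<and> (\<forall>x\<in>X. sigma2 x t > 0)"
    and b: "\<forall>t\<in>Theta.
              filterlim (scale_measure mu sigma2 xstar t) at_bot (left_end xl)
            \<and> filterlim (scale_measure mu sigma2 xstar t) at_top (right_end xr)"
    and th: "th \<in> Theta"
    and c: "admissible_V X V"
  shows "identified mu sigma2 Theta X (th, V) \<longleftrightarrow>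
    \<not> (\<exists>eta1 eta2 th'. th' \<in> Theta \<and> eta1 > 0 \<and> (eta1 \<noteq> 1 \<or> eta2 \<noteq> 0 \<or> th' \<noteq> th) \<and>
         (\<forall>xb \<in> scale_measure mu sigma2 xstar th ` X.
            sigma2_bar mu sigma2 X xstar th' xb
              = sigma2_bar mu sigma2 X xstar th (eta1 * xb + eta2) / eta1\<^sup>2))"
proof -
  have X: "X = {x. xl < ereal x \<and> ereal x < xr}"
    by (simp add: X_def)
  interpret diffusion_model mu sigma2 Theta X xstar
    using open_interval_ereal[of xl xr] X xstar a by unfold_locales auto
  have "scale_measure mu sigma2 xstar t ` X = UNIV" if "t \<in> Theta" for t
  proof (rule image_eq_UNIV_if_filterlim_ends[OF X xstar])
    show "continuous_on X (scale_measure mu sigma2 xstar t)"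
      using admissible_scale_measure[OF that] C2_on_imp_continuous_on(1) by (auto simp: admissible_V_def)
  qed (use b that in auto)
  then interpret recurrent_diffusion_model mu sigma2 Theta X xstar
    by unfold_locales
  show ?thesis
    using identified_iff_no_affine_sigma2_bar_relation[OF th c] scale_measure_surj[OF th] by simp
qed

end
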